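(* A diamond-free graph is clique simplicial if and only if it is edge simplicial.
   Context: A vertex $v$ is simplicial if $N[v]$ is a clique; a clique is simplicial if it equals $N[v]$ for a simplicial vertex $v$. A graph is clique simplicial if every inclusion-maximal clique is simplicial, and edge simplicial if every edge lies in a simplicial clique. The diamond is $K_4$ minus one edge; diamond-free means no induced diamond. *)

theory Defs
  imports Main
begin

definition graph :: "'a set \<Rightarrow> ('a \<Rightarrow> 'a \<Rightarrow> bool) \<Rightarrow> bool" where
  "graph V E \<longleftrightarrow> finite V \<and> V \<noteq> {} \<and> (\<forall>u v. E u v \<longrightarrow> E v u) \<and> (\<forall>v. \<not> E v v)
      \<and> (\<forall>u v. E u v \<longrightarrow> u \<in> V \<and> v \<in> V)"

definition clique :: "'a set \<Rightarrow> ('a \<Rightarrow> 'a \<Rightarrow> bool) \<Rightarrow> 'a set \<Rightarrow> bool" where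
  "clique V E K \<longleftrightarrow> K \<subseteq> V \<and> (\<forall>u\<in>K. \<forall>v\<in>K. u \<noteq> v \<longrightarrow> E u v)"

definition maximal_clique :: "'a set \<Rightarrow> ('a \<Rightarrow> 'a \<Rightarrow> bool) \<Rightarrow> 'a set \<Rightarrow> bool" where
  "maximal_clique V E K \<longleftrightarrow> clique V E K \<and> (\<forall>K'. clique V E K' \<and> K \<subseteq> K' \<longrightarrow> K' = K)"

definition closed_nbhd :: "'a set \<Rightarrow> ('a \<Rightarrow> 'a \<Rightarrow> bool) \<Rightarrow> 'a \<Rightarrow> 'a set" where
  "closed_nbhd V E v = insert v {u \<in> V. E v u}"

definition simplicial_vertex :: "'a set \<Rightarrow> ('a \<Rightarrow> 'a \<Rightarrow> bool) \<Rightarrow> 'a \<Rightarrow> bool" where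
  "simplicial_vertex V E v \<longleftrightarrow> v \<in> V \<and> clique V E (closed_nbhd V E v)"

definition simplicial_clique :: "'a set \<Rightarrow> ('a \<Rightarrow> 'a \<Rightarrow> bool) \<Rightarrow> 'a set \<Rightarrow> bool" where
  "simplicial_clique V E K \<longleftrightarrow> (\<exists>v. simplicial_vertex V E v \<and> K = closed_nbhd V E v)"

definition clique_simplicial :: "'a set \<Rightarrow> ('a \<Rightarrow> 'a \<Rightarrow> bool) \<Rightarrow> bool" where
  "clique_simplicial V E \<longleftrightarrow> (\<forall>K. maximal_clique V E K \<longrightarrow> simplicial_clique V E K)"

definition edge_simplicial :: "'a set \<Rightarrow> ('a \<Rightarrow> 'a \<Rightarrow> bool) \<Rightarrow> bool" where
  "edge_simplicial V E \<longleftrightarrow>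
     (\<forall>u v. E u v \<longrightarrow> (\<exists>K. simplicial_clique V E K \<and> u \<in> K \<and> v \<in> K))"

definition diamond_free :: "'a set \<Rightarrow> ('a \<Rightarrow> 'a \<Rightarrow> bool) \<Rightarrow> bool" where
  "diamond_free V E \<longleftrightarrow> \<not> (\<exists>a\<in>V. \<exists>b\<in>V. \<exists>c\<in>V. \<exists>d\<in>V.
      distinct [a, b, c, d] \<and> E a b \<and> E a c \<and> E a d \<and> E b c \<and> E b d \<and> \<not> E c d)"

end

theory Submission
  imports Defs
begin

text \<open>An edge simplicial graph is clique simplicial when diamond-free: a maximal clique K
contains an edge uv, which lies in N[w] for some simplicial w. A vertex x of K outside N[w]
would make u, v, w, x an induced diamond (or contradict w \<in> K), so K \<subseteq> N[w], and
maximality gives K = N[w]. Maximal cliques without an edge are isolated vertices v,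
where K = N[v]. The converse holds in every finite graph, as each edge extends to a
maximal clique.\<close>

lemma maximal_clique_exists:
  assumes "finite V" and "clique V E C"
  shows "\<exists>K. maximal_clique V E K \<and> C \<subseteq> K"
  using assms(2)
proof (induction "card V - card C" arbitrary: C rule: less_induct)
  case less
  show ?case
  proof (cases "maximal_clique V E C")
    case False
    then obtain K' where K': "clique V E K'" "C \<subset> K'"
      using less.prems unfolding maximal_clique_def by blast
    have "K' \<subseteq> V" using K'(1) unfolding clique_def by blast
    with \<open>finite V\<close> have "finite K'" "card K' \<le> card V"
      by (auto intro: card_mono finite_subset)
    with K'(2) have "card C < card K'" by (simp add: psubset_card_mono)
    with \<open>card K' \<le> card V\<close> have "card V - card K' < card V - card C" by linarith
    then obtain K where "maximal_clique V E K" "K' \<subseteq> K"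
      using less.hyps K'(1) by blast
    with K'(2) show ?thesis by blast
  qed blast
qed

lemma clique_simplicial_imp_edge_simplicial:
  assumes "graph V E" and "clique_simplicial V E"
  shows "edge_simplicial V E"
  unfolding edge_simplicial_def
proof (intro allI impI)
  fix u v assume "E u v"
  with assms(1) have "clique V E {u, v}" and "finite V"
    unfolding graph_def clique_def by blast+
  then obtain K where "maximal_clique V E K" "{u, v} \<subseteq> K"
    using maximal_clique_exists by blast
  with assms(2) show "\<exists>K. simplicial_clique V E K \<and> u \<in> K \<and> v \<in> K"
    unfolding clique_simplicial_def by blast
qed

lemma maximal_clique_subset_closed_nbhd:
  assumes "graph V E" and "diamond_free V E" and "maximal_clique V E K"
    and "u \<in> K" "v \<in> K" "u \<noteq> v"
    and "w \<in> V" "u \<in> closed_nbhd V E w" "v \<in> closed_nbhd V E w"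
  shows "K \<subseteq> closed_nbhd V E w"
proof
  fix x assume "x \<in> K"
  have cK: "\<And>a b. a \<in> K \<Longrightarrow> b \<in> K \<Longrightarrow> a \<noteq> b \<Longrightarrow> E a b" and "K \<subseteq> V"
    using assms(3) unfolding maximal_clique_def clique_def by blast+
  have symE: "\<And>a b. E a b \<Longrightarrow> E b a" using assms(1) unfolding graph_def by blast
  show "x \<in> closed_nbhd V E w"
  proof (rule ccontr)
    assume x: "x \<notin> closed_nbhd V E w"
    with \<open>x \<in> K\<close> \<open>K \<subseteq> V\<close> have "x \<noteq> w" "\<not> E w x"
      unfolding closed_nbhd_def by auto
    have "x \<noteq> u" "x \<noteq> v" using x assms(8,9) by auto
    show False
    proof (cases "w \<in> K")
      case True
      with \<open>x \<in> K\<close> \<open>x \<noteq> w\<close> \<open>\<not> E w x\<close> cK show False by blast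
    next
      case False
      with assms(4,5) have "w \<noteq> u" "w \<noteq> v" by auto
      with assms(8,9) symE have "E u w" "E v w" unfolding closed_nbhd_def by auto
      moreover have "E u v" "E u x" "E v x"
        using cK assms(4-6) \<open>x \<in> K\<close> \<open>x \<noteq> u\<close> \<open>x \<noteq> v\<close> by auto
      moreover have "w \<in> V" "x \<in> V" "u \<in> V" "v \<in> V"
        using assms(4,5,7) \<open>K \<subseteq> V\<close> \<open>x \<in> K\<close> by auto
      ultimately have "\<exists>a\<in>V. \<exists>b\<in>V. \<exists>c\<in>V. \<exists>d\<in>V. distinct [a, b, c, d]
          \<and> E a b \<and> E a c \<and> E a d \<and> E b c \<and> E b d \<and> \<not> E c d"
        using assms(6) \<open>\<not> E w x\<close> \<open>w \<noteq> u\<close> \<open>w \<noteq> v\<close> \<open>x \<noteq> u\<close> \<open>x \<noteq> v\<close> \<open>x \<noteq> w\<close>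
        by (intro bexI[of _ u] bexI[of _ v] bexI[of _ w] bexI[of _ x]) auto
      with assms(2) show False unfolding diamond_free_def by blast
    qed
  qed
qed

lemma edgeless_maximal_clique_simplicial:
  assumes "graph V E" and "maximal_clique V E K" and "\<forall>u\<in>K. \<forall>v\<in>K. u = v"
  shows "simplicial_clique V E K"
proof -
  have cK: "clique V E K" and mx: "\<And>K'. clique V E K' \<Longrightarrow> K \<subseteq> K' \<Longrightarrow> K' = K"
    using assms(2) unfolding maximal_clique_def by blast+
  have symE: "\<And>a b. E a b \<Longrightarrow> E b a" and irr: "\<And>a. \<not> E a a"
    and inV: "\<And>a b. E a b \<Longrightarrow> a \<in> V \<and> b \<in> V" and "V \<noteq> {}"
    using assms(1) unfolding graph_def by blast+
  then obtain a0 where "a0 \<in> V" by blast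
  then have "clique V E {a0}" unfolding clique_def by simp
  then have "K \<noteq> {}" using mx[of "{a0}"] by blast
  with assms(3) obtain a where K: "K = {a}" by fast
  have "\<not> E a b" for b
  proof
    assume "E a b"
    then have "clique V E {a, b}" using inV symE unfolding clique_def by blast
    with mx K have "b = a" by blast
    with \<open>E a b\<close> irr show False by blast
  qed
  then have "closed_nbhd V E a = K" using K unfolding closed_nbhd_def by blast
  moreover have "a \<in> V" using cK K unfolding clique_def by simp
  ultimately show ?thesis
    using cK unfolding simplicial_clique_def simplicial_vertex_def by metis
qed

lemma edge_simplicial_imp_clique_simplicial:
  assumes "graph V E" and "diamond_free V E" and "edge_simplicial V E"
  shows "clique_simplicial V E"
  unfolding clique_simplicial_def
proof (intro allI impI)
  fix K assume mK: "maximal_clique V E K"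
  show "simplicial_clique V E K"
  proof (cases "\<exists>u\<in>K. \<exists>v\<in>K. u \<noteq> v")
    case True
    then obtain u v where uv: "u \<in> K" "v \<in> K" "u \<noteq> v" by blast
    with mK have "E u v" unfolding maximal_clique_def clique_def by blast
    with assms(3) obtain w where w: "simplicial_vertex V E w"
      "u \<in> closed_nbhd V E w" "v \<in> closed_nbhd V E w"
      unfolding edge_simplicial_def simplicial_clique_def by blast
    then have "K \<subseteq> closed_nbhd V E w"
      using maximal_clique_subset_closed_nbhd[OF assms(1,2) mK uv]
      unfolding simplicial_vertex_def by blast
    with mK w(1) have "K = closed_nbhd V E w"
      unfolding maximal_clique_def simplicial_vertex_def by blast
    with w(1) show ?thesis unfolding simplicial_clique_def by blast
  next
    case False
    with assms(1) mK show ?thesis using edgeless_maximal_clique_simplicial by blast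
  qed
qed

theorem mainTheorem13:
  assumes "graph V E" and "diamond_free V E"
  shows "clique_simplicial V E \<longleftrightarrow> edge_simplicial V E"
  using clique_simplicial_imp_edge_simplicial edge_simplicial_imp_clique_simplicial assms
  by blast

end
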